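(* Let $X_1,X_2,\ldots$ be i.i.d. random variables with $\mathbb EX_k=0$, $\operatorname{Var}X_k=1$, such that for some $\alpha\in[1,2)$ and $D>0$, $$\lim_{x\to+\infty}\frac1{x^\alpha}\log\mathbb P[X_1>x]=-D.$$ Then $\lim_{n\to\infty}\mathbb P[\mathbf M_n=\mathbf U_n]=1$, where $\mathbf U_n=\max\{X_1,\ldots,X_n\}$.
   Context: $S_0=0$, $S_k=X_1+\cdots+X_k$, $\mathbf M_n=\max_{0\leq i<j\leq n}\frac{S_j-S_i}{\sqrt{j-i}}$. *)

theory Defs
  imports "HOL-Probability.Probability"
begin

definition psum :: "(nat \<Rightarrow> 'a \<Rightarrow> real) \<Rightarrow> nat \<Rightarrow> 'a \<Rightarrow> real" where
  "psum X k \<omega> = (\<Sum>i\<in>{1..k}. X i \<omega>)"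

definition Mmax :: "(nat \<Rightarrow> 'a \<Rightarrow> real) \<Rightarrow> nat \<Rightarrow> 'a \<Rightarrow> real" where
  "Mmax X n \<omega> = Max {(psum X j \<omega> - psum X i \<omega>) / sqrt (real (j - i)) | i j. i < j \<and> j \<le> n}"

definition Umax :: "(nat \<Rightarrow> 'a \<Rightarrow> real) \<Rightarrow> nat \<Rightarrow> 'a \<Rightarrow> real" where
  "Umax X n \<omega> = Max {X k \<omega> | k. 1 \<le> k \<and> k \<le> n}"

end

theory Submission
  imports Defs "HOL-Real_Asymp.Real_Asymp"
begin

text \<open>
  Put \<open>\<beta> = 1 - \<alpha>/2 > 0\<close> and \<open>V\<^sub>n = (c log n)\<^bsup>1/\<alpha>\<^esup>\<close>, where \<open>c\<close> is slightly below \<open>1/D\<close>.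
  Since \<open>P[X\<^sub>1 > x] = exp (-(D + o(1)) x\<^sup>\<alpha>)\<close> and \<open>D c < 1\<close>, the maximum \<open>U\<^sub>n\<close> exceeds \<open>V\<^sub>n\<close>
  with probability tending to one. On that event \<open>M\<^sub>n = U\<^sub>n\<close> unless some window of \<open>k \<ge> 2\<close>
  consecutive summands has \<open>S\<^sub>j - S\<^sub>i > \<surd>k V\<^sub>n\<close>, and the union bound over the fewer than \<open>n\<^sup>2\<close>
  windows disposes of these events.

  For short windows, the power-mean inequality turns \<open>S\<^sub>j - S\<^sub>i > \<surd>k V\<^sub>n\<close> into
  \<open>\<Sum> (X\<^sub>m\<^sup>+)\<^sup>\<alpha> > k\<^sup>\<beta> V\<^sub>n\<^sup>\<alpha> = k\<^sup>\<beta> c log n\<close>; the variables \<open>(X\<^sub>m\<^sup>+)\<^sup>\<alpha>\<close> have exponential moments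
  of every order \<open>s < D\<close>, so a Chernoff bound gives probability \<open>n\<^bsup>-2\<^sup>\<beta> s' c\<^esup>\<close> for any \<open>s' < s\<close>.
  As \<open>2\<^sup>\<beta> > 1\<close>, the constants can be chosen with \<open>2\<^sup>\<beta> s' c > 1\<close>, which beats the \<open>n (log n)\<^sup>2\<close> short
  windows. For long windows, the moment generating function of \<open>X\<^sub>1\<close> is sub-Gaussian near \<open>0\<close>
  (mean zero, finite variance, exponential tail), and a Chernoff bound gives \<open>n\<^sup>-\<^sup>3\<close> per window.
\<close>

lemma exp_le_second_order_bound:
  fixes y :: real
  shows "exp y \<le> 1 + y + y\<^sup>2 / 2 * exp (max y 0)"
proof (cases "y \<le> 0")
  case True
  obtain t where t: "exp y = (\<Sum>m<3. y ^ m / fact m) + exp t / fact 3 * y ^ 3"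
    using Maclaurin_exp_le[of y 3] by blast
  have "exp t / fact 3 * y ^ 3 \<le> 0"
    using True by (intro mult_nonneg_nonpos) (auto simp: power_le_zero_eq)
  thus ?thesis using t True by (simp add: eval_nat_numeral)
next
  case False
  obtain t where t: "\<bar>t\<bar> \<le> \<bar>y\<bar>" "exp y = (\<Sum>m<2. y ^ m / fact m) + exp t / fact 2 * y ^ 2"
    using Maclaurin_exp_le[of y 2] by blast
  have "exp t \<le> exp y" using t(1) False by simp
  thus ?thesis using t(2) False by (simp add: eval_nat_numeral mult.commute)
qed

lemma exp_ge_second_order:
  fixes y :: real
  assumes "0 \<le> y"
  shows "1 + y + y\<^sup>2 / 2 \<le> exp y"
proof -
  obtain t where t: "exp y = (\<Sum>m<3. y ^ m / fact m) + exp t / fact 3 * y ^ 3"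
    using Maclaurin_exp_le[of y 3] by blast
  have "0 \<le> exp t / fact 3 * y ^ 3" using assms by simp
  thus ?thesis using t by (simp add: eval_nat_numeral)
qed

lemma exp_mult_le_second_order:
  fixes z t t0 :: real
  assumes "0 \<le> t" "t \<le> t0"
  shows "exp (t * z) \<le> 1 + t * z + t\<^sup>2 / 2 * (z\<^sup>2 * exp (t0 * max 0 z))"
proof -
  have "max (t * z) 0 \<le> t0 * max 0 z"
    using assms by (cases "z \<le> 0") (auto simp: mult_nonneg_nonpos mult_right_mono)
  hence "(t * z)\<^sup>2 / 2 * exp (max (t * z) 0) \<le> (t * z)\<^sup>2 / 2 * exp (t0 * max 0 z)"
    by (intro mult_left_mono) auto
  thus ?thesis using exp_le_second_order_bound[of "t * z"] by (simp add: power_mult_distrib)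
qed

lemma sq_mult_exp_le:
  fixes z t0 :: real
  assumes "0 < t0"
  shows "z\<^sup>2 * exp (t0 * max 0 z) \<le> z\<^sup>2 + 2 / t0\<^sup>2 * exp (2 * t0 * max 0 z)"
proof (cases "z \<le> 0")
  case False
  have "0 \<le> t0 * z" using False assms by simp
  hence "(t0 * z)\<^sup>2 / 2 \<le> exp (t0 * z)"
    using exp_ge_second_order[of "t0 * z"] by linarith
  hence "z\<^sup>2 \<le> 2 / t0\<^sup>2 * exp (t0 * z)"
    using assms by (simp add: field_simps)
  hence "z\<^sup>2 * exp (t0 * z) \<le> 2 / t0\<^sup>2 * exp (t0 * z) * exp (t0 * z)"
    by (rule mult_right_mono) simp
  also have "\<dots> = 2 / t0\<^sup>2 * exp (2 * t0 * z)" by (simp add: exp_add[symmetric])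
  finally show ?thesis using False by (simp add: add_increasing)
qed simp

lemma exp_le_sum_of_steps:
  fixes s z z0 :: real
  assumes "0 \<le> s"
  shows "summable (\<lambda>m::nat. exp (s * (z0 + m + 1)) * indicator {z0 + m<..} z)" (is "summable ?f")
    and "exp (s * z) \<le> exp (s * (z0 + 1)) + (\<Sum>m. exp (s * (z0 + m + 1)) * indicator {z0 + m<..} z)"
proof -
  show sum: "summable ?f"
    by (rule summable_finite[of "{..<nat \<lceil>z - z0\<rceil>}"]) (auto simp: indicator_def, linarith)
  have nonneg: "0 \<le> suminf ?f" by (intro suminf_nonneg[OF sum]) simp
  show "exp (s * z) \<le> exp (s * (z0 + 1)) + suminf ?f"
  proof (cases "z \<le> z0 + 1")
    case True
    hence "exp (s * z) \<le> exp (s * (z0 + 1))" using assms by (simp add: mult_left_mono)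
    thus ?thesis using nonneg by linarith
  next
    case False
    define m where "m = nat \<lceil>z - z0\<rceil> - 1"
    have m: "z0 + m < z" "z \<le> z0 + m + 1" using False by (auto simp: m_def) linarith+
    hence "exp (s * z) \<le> ?f m" using assms by (simp add: mult_left_mono)
    also have "\<dots> \<le> suminf ?f" using sum_le_suminf[OF sum, of "{m}"] by (simp del: sum_mult_indicator)
    finally show ?thesis using exp_gt_zero[of "s * (z0 + 1)"] by linarith
  qed
qed

lemma convex_on_powr_nonneg:
  assumes "(1::real) \<le> p"
  shows "convex_on {0..} (\<lambda>x::real. x powr p)"
proof (rule convex_onI)
  fix t x y :: real
  assume t: "0 < t" "t < 1" and xy: "x \<in> {0..}" "y \<in> {0..}"
  show "((1 - t) *\<^sub>R x + t *\<^sub>R y) powr p \<le> (1 - t) * x powr p + t * y powr p"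
  proof (cases "x = 0 \<or> y = 0")
    case True
    have "t powr p \<le> t" "(1 - t) powr p \<le> 1 - t"
      using t assms by (auto intro: powr_le_one_le)
    with True xy t show ?thesis by (auto simp: powr_mult mult_right_mono)
  next
    case False
    with xy have "x \<in> {0<..}" "y \<in> {0<..}" by auto
    thus ?thesis using convex_onD[OF powr_convex[OF assms], of t x y] t by simp
  qed
qed simp

lemma power_mean_powr_sum:
  fixes y :: "'b \<Rightarrow> real"
  assumes "finite W" "W \<noteq> {}" "1 \<le> p" "\<And>i. i \<in> W \<Longrightarrow> 0 \<le> y i"
  shows "real (card W) powr (1 - p) * (\<Sum>i\<in>W. y i) powr p \<le> (\<Sum>i\<in>W. y i powr p)"
proof -
  define k where "k = real (card W)"
  have k: "k > 0" using assms(1,2) by (simp add: k_def card_gt_0_iff)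
  have "(\<lambda>x. x powr p) (\<Sum>i\<in>W. (1/k) *\<^sub>R y i) \<le> (\<Sum>i\<in>W. (1/k) * (\<lambda>x. x powr p) (y i))"
    using assms(4) k
    by (intro convex_on_sum[OF assms(1,2) convex_on_powr_nonneg[OF assms(3)]]) (auto simp: k_def)
  hence "(\<Sum>i\<in>W. y i) powr p / k powr p \<le> (\<Sum>i\<in>W. y i powr p) / k"
    using assms(4) k
    by (simp add: sum_distrib_left[symmetric] sum_divide_distrib[symmetric] powr_divide sum_nonneg)
  hence "k * ((\<Sum>i\<in>W. y i) powr p / k powr p) \<le> (\<Sum>i\<in>W. y i powr p)"
    using k by (simp add: field_simps)
  thus ?thesis using k by (simp add: k_def powr_diff)
qed

lemma quadratic_exponent_le:
  fixes C r V t0 a :: real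
  assumes "0 < C" "0 < r" "0 < t0" "0 \<le> V" "4 * C * a \<le> V\<^sup>2" "2 * a \<le> t0 * r * V"
  shows "\<exists>t\<in>{0..t0}. - t * (r * V) + r\<^sup>2 * (C * t\<^sup>2) \<le> - a"
proof (cases "V / (2 * C * r) \<le> t0")
  case True
  define t where "t = V / (2 * C * r)"
  have "- t * (r * V) + r\<^sup>2 * (C * t\<^sup>2) = - V\<^sup>2 / (4 * C)"
    using assms(1,2) by (simp add: t_def field_simps power2_eq_square)
  also have "\<dots> \<le> - a" using assms(1,5) by (simp add: field_simps)
  finally show ?thesis using True assms(1,2,4) by (intro bexI[of _ t]) (auto simp: t_def)
next
  case False
  hence "2 * C * t0 * r < V" using assms(1,2) by (simp add: field_simps)
  hence "r\<^sup>2 * (C * t0\<^sup>2) \<le> (t0 * r) * (V / 2)"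
    using assms(2,3) by (simp add: power2_eq_square mult_left_mono algebra_simps)
  hence "- t0 * (r * V) + r\<^sup>2 * (C * t0\<^sup>2) \<le> - a" using assms(6) by (simp add: algebra_simps)
  thus ?thesis using assms(3) by (intro bexI[of _ t0]) auto
qed

lemma stretched_exponent_le:
  fixes k \<beta> a b s s' :: real
  assumes "2 \<le> k" "0 \<le> \<beta>" "0 \<le> s'" "0 \<le> a" "k powr (1 - \<beta>) * b \<le> (s - s') * a"
  shows "- s * (k powr \<beta> * a) + k * b \<le> - (2 powr \<beta> * s' * a)"
proof -
  have "k * b = k powr \<beta> * (k powr (1 - \<beta>) * b)"
    using assms(1) by (simp add: powr_add[symmetric])
  also have "\<dots> \<le> k powr \<beta> * ((s - s') * a)" by (intro mult_left_mono assms(5)) simp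
  finally have "- s * (k powr \<beta> * a) + k * b \<le> - (k powr \<beta> * (s' * a))" by (simp add: algebra_simps)
  moreover have "2 powr \<beta> * (s' * a) \<le> k powr \<beta> * (s' * a)"
    using assms by (intro mult_right_mono powr_mono2) auto
  ultimately show ?thesis by simp
qed

lemma rate_constants_exist:
  fixes \<gamma> D :: real
  assumes "1 < \<gamma>" "0 < D"
  obtains s' s D' c where "0 < s'" "s' < s" "s < D" "D < D'" "0 < c" "D' * c < 1" "1 < \<gamma> * s' * c"
proof
  define q where "q = \<gamma> powr (1/6)"
  have q: "1 < q" using assms(1) by (simp add: q_def)
  have q6: "\<gamma> = q ^ 6" using assms(1) by (simp add: q_def powr_realpow[symmetric] powr_powr)
  have "1 < q ^ 2" "q < q ^ 2" using q by (simp_all add: power2_eq_square less_1_mult mult_less_cancel_left1)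
  with q assms(2) show "0 < D / q\<^sup>2" "D / q\<^sup>2 < D / q" "D / q < D" "D < D * q" "0 < 1 / (D * q\<^sup>2)"
    "D * q * (1 / (D * q\<^sup>2)) < 1" "1 < \<gamma> * (D / q\<^sup>2) * (1 / (D * q\<^sup>2))"
    by (auto simp: q6 field_simps power2_eq_square power_numeral_reduce)
qed

lemma threshold_bound_tendsto_0:
  fixes e g c t0 \<alpha> :: real
  assumes "e < 1" "1 < g" "0 < c" "0 < t0" "1 \<le> \<alpha>"
  shows "(\<lambda>n::nat. exp (- (n * exp (- (e * ln n))))
    + n * ((6 * ln n / (t0 * (c * ln n) powr (1 / \<alpha>)))\<^sup>2 * exp (- (g * ln n)) + n * exp (- (3 * ln n))))
    \<longlonglongrightarrow> 0"
proof -
  have "(\<lambda>n::nat. exp (- (n * exp (- (e * ln n))))) \<longlonglongrightarrow> 0" using assms by real_asymp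
  moreover have "(\<lambda>n::nat. n * ((6 * ln n / (t0 * (c * ln n) powr (1 / \<alpha>)))\<^sup>2 * exp (- (g * ln n)))) \<longlonglongrightarrow> 0"
    using assms by real_asymp
  moreover have "(\<lambda>n::nat. n * (n * exp (- (3 * ln n)))) \<longlonglongrightarrow> 0" by real_asymp
  ultimately show ?thesis by (simp add: distrib_left tendsto_add_zero)
qed

lemma eventually_threshold_conditions:
  fixes c \<alpha> C t0 K Q x0 :: real
  assumes "0 < c" "1 \<le> \<alpha>" "\<alpha> < 2" "0 < t0" "0 < Q"
  shows "\<forall>\<^sub>F n in sequentially. 3 \<le> n \<and> x0 \<le> (c * ln (real n)) powr (1 / \<alpha>)
    \<and> 12 * C * ln (real n) \<le> ((c * ln (real n)) powr (1 / \<alpha>))\<^sup>2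
    \<and> (6 * ln (real n) / t0) powr \<alpha> * K \<le> Q * (ln (real n))\<^sup>2"
proof (intro eventually_conj)
  show "\<forall>\<^sub>F n in sequentially. x0 \<le> (c * ln (real n)) powr (1 / \<alpha>)" using assms by real_asymp
  show "\<forall>\<^sub>F n in sequentially. 12 * C * ln (real n) \<le> ((c * ln (real n)) powr (1 / \<alpha>))\<^sup>2"
    using assms by real_asymp
  show "\<forall>\<^sub>F n in sequentially. (6 * ln (real n) / t0) powr \<alpha> * K \<le> Q * (ln (real n))\<^sup>2"
    using assms by real_asymp
qed (rule eventually_ge_at_top)

lemma sum_over_windows_le:
  fixes w :: "nat \<Rightarrow> real"
  assumes "\<And>k. 0 \<le> w k"
  shows "(\<Sum>(i, j) \<in> {(i, j). i < j \<and> j \<le> n \<and> 2 \<le> j - i}. w (j - i)) \<le> n * (\<Sum>k = 2..n. w k)"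
proof -
  have "{(i, j). i < j \<and> j \<le> n \<and> 2 \<le> j - i} = Sigma {..<n} (\<lambda>i. {i + 2..n})" by auto
  hence "(\<Sum>(i, j) \<in> {(i, j). i < j \<and> j \<le> n \<and> 2 \<le> j - i}. w (j - i)) = (\<Sum>i<n. \<Sum>j = i + 2..n. w (j - i))"
    by (simp add: sum.Sigma)
  also have "\<dots> \<le> (\<Sum>i<n. \<Sum>k = 2..n. w k)"
  proof (rule sum_mono)
    fix i
    have "(\<Sum>j = i + 2..n. w (j - i)) = (\<Sum>k \<in> (\<lambda>j. j - i) ` {i + 2..n}. w k)"
      by (subst sum.reindex) (auto simp: inj_on_def)
    also have "\<dots> \<le> (\<Sum>k = 2..n. w k)" by (intro sum_mono2) (auto simp: assms)
    finally show "(\<Sum>j = i + 2..n. w (j - i)) \<le> (\<Sum>k = 2..n. w k)" .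
  qed
  finally show ?thesis by simp
qed

lemma sum_threshold_le:
  fixes a b R :: real
  assumes "0 \<le> a" "0 \<le> b"
  shows "(\<Sum>k = 2..n. if sqrt (real k) \<le> R then a else b) \<le> R\<^sup>2 * a + n * b"
proof -
  have "(\<Sum>k = 2..n. if sqrt (real k) \<le> R then a else b) \<le> (\<Sum>k = 2..n. (if real k \<le> R\<^sup>2 then a else 0) + b)"
  proof (rule sum_mono)
    fix k
    have "real k \<le> R\<^sup>2" if "sqrt (real k) \<le> R"
      using power_mono[OF that, of 2] by simp
    thus "(if sqrt (real k) \<le> R then a else b) \<le> (if real k \<le> R\<^sup>2 then a else 0) + b"
      using assms by auto
  qed
  also have "\<dots> = card {k \<in> {2..n}. real k \<le> R\<^sup>2} * a + card {2..n} * b"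
    by (simp add: sum.distrib sum.inter_filter[symmetric])
  also have "\<dots> \<le> R\<^sup>2 * a + n * b"
  proof (intro add_mono mult_right_mono assms)
    have "{k \<in> {2..n}. real k \<le> R\<^sup>2} \<subseteq> {1..nat \<lfloor>R\<^sup>2\<rfloor>}" by (auto simp: le_nat_floor)
    hence "card {k \<in> {2..n}. real k \<le> R\<^sup>2} \<le> nat \<lfloor>R\<^sup>2\<rfloor>"
      using card_mono[of "{1..nat \<lfloor>R\<^sup>2\<rfloor>}"] by fastforce
    hence "real (card {k \<in> {2..n}. real k \<le> R\<^sup>2}) \<le> real (nat \<lfloor>R\<^sup>2\<rfloor>)" by linarith
    also have "\<dots> \<le> R\<^sup>2" by (simp add: of_nat_floor)
    finally show "real (card {k \<in> {2..n}. real k \<le> R\<^sup>2}) \<le> R\<^sup>2" .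
  qed simp
  finally show ?thesis .
qed

section \<open>Chernoff bounds\<close>

lemma integrable_comp_cong_distr:
  fixes X Y :: "'a \<Rightarrow> real" and g :: "real \<Rightarrow> real"
  assumes [measurable]: "X \<in> borel_measurable M" "Y \<in> borel_measurable M" "g \<in> borel_measurable borel"
    and "distr M borel X = distr M borel Y"
  shows "integrable M (\<lambda>\<omega>. g (X \<omega>)) \<longleftrightarrow> integrable M (\<lambda>\<omega>. g (Y \<omega>))"
  by (metis assms integrable_distr_eq)

lemma integral_comp_cong_distr:
  fixes X Y :: "'a \<Rightarrow> real" and g :: "real \<Rightarrow> real"
  assumes [measurable]: "X \<in> borel_measurable M" "Y \<in> borel_measurable M" "g \<in> borel_measurable borel"
    and "distr M borel X = distr M borel Y"
  shows "(\<integral>\<omega>. g (X \<omega>) \<partial>M) = (\<integral>\<omega>. g (Y \<omega>) \<partial>M)"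
  by (metis assms integral_distr)

lemma (in prob_space) chernoff_sum:
  fixes Z :: "'i \<Rightarrow> 'a \<Rightarrow> real"
  assumes ind: "indep_vars (\<lambda>_. borel) Z W" and fin: "finite W"
    and int: "\<And>i. i \<in> W \<Longrightarrow> integrable M (\<lambda>\<omega>. exp (t * Z i \<omega>))"
    and bnd: "\<And>i. i \<in> W \<Longrightarrow> (\<integral>\<omega>. exp (t * Z i \<omega>) \<partial>M) \<le> B"
    and t: "0 \<le> t"
  shows "prob {\<omega> \<in> space M. y < (\<Sum>i\<in>W. Z i \<omega>)} \<le> exp (- t * y) * B ^ card W"
proof -
  have ind_exp: "indep_vars (\<lambda>_. borel) (\<lambda>i \<omega>. exp (t * Z i \<omega>)) W"
    by (rule indep_vars_compose2[OF ind]) auto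
  have int_prod: "integrable M (\<lambda>\<omega>. \<Prod>i\<in>W. exp (t * Z i \<omega>))"
    by (rule indep_vars_integrable[OF fin ind_exp int])
  have "{\<omega> \<in> space M. y < (\<Sum>i\<in>W. Z i \<omega>)}
      \<subseteq> {\<omega> \<in> space M. exp (t * y) \<le> (\<Prod>i\<in>W. exp (t * Z i \<omega>))}"
    using t by (auto simp: exp_sum[OF fin, symmetric] sum_distrib_left[symmetric] mult_left_mono)
  hence "prob {\<omega> \<in> space M. y < (\<Sum>i\<in>W. Z i \<omega>)}
      \<le> prob {\<omega> \<in> space M. exp (t * y) \<le> (\<Prod>i\<in>W. exp (t * Z i \<omega>))}"
    by (rule finite_measure_mono) (use int_prod in measurable)
  also have "\<dots> \<le> (\<integral>\<omega>. (\<Prod>i\<in>W. exp (t * Z i \<omega>)) \<partial>M) / exp (t * y)"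
    by (rule integral_Markov_inequality_measure[OF int_prod]) (auto intro!: prod_nonneg)
  also have "(\<integral>\<omega>. (\<Prod>i\<in>W. exp (t * Z i \<omega>)) \<partial>M) = (\<Prod>i\<in>W. \<integral>\<omega>. exp (t * Z i \<omega>) \<partial>M)"
    by (rule indep_vars_lebesgue_integral[OF fin ind_exp int])
  also have "\<dots> \<le> B ^ card W"
    using prod_mono[of W "\<lambda>i. \<integral>\<omega>. exp (t * Z i \<omega>) \<partial>M" "\<lambda>_. B"] bnd by auto
  finally show ?thesis by (simp add: exp_minus field_simps divide_right_mono)
qed

lemma (in prob_space) chernoff_sum_iid:
  fixes X :: "'i \<Rightarrow> 'a \<Rightarrow> real" and Z :: "'a \<Rightarrow> real" and g :: "real \<Rightarrow> real"
  assumes ind: "indep_vars (\<lambda>_. borel) X W" and fin: "finite W"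
    and distr: "\<And>i. i \<in> W \<Longrightarrow> distr M borel (X i) = distr M borel Z"
    and [measurable]: "Z \<in> borel_measurable M" "g \<in> borel_measurable borel"
    and int: "integrable M (\<lambda>\<omega>. exp (t * g (Z \<omega>)))" and t: "0 \<le> t"
  shows "prob {\<omega> \<in> space M. y < (\<Sum>i\<in>W. g (X i \<omega>))}
    \<le> exp (- t * y) * (\<integral>\<omega>. exp (t * g (Z \<omega>)) \<partial>M) ^ card W"
proof (rule chernoff_sum[OF _ fin _ _ t])
  show "indep_vars (\<lambda>_. borel) (\<lambda>i \<omega>. g (X i \<omega>)) W"
    by (rule indep_vars_compose2[OF ind]) auto
  fix i assume i: "i \<in> W"
  hence [measurable]: "X i \<in> borel_measurable M" using ind by (auto simp: indep_vars_def)
  show "integrable M (\<lambda>\<omega>. exp (t * g (X i \<omega>)))"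
    using integrable_comp_cong_distr[of "X i" M Z "\<lambda>x. exp (t * g x)"] distr[OF i] int by simp
  show "(\<integral>\<omega>. exp (t * g (X i \<omega>)) \<partial>M) \<le> (\<integral>\<omega>. exp (t * g (Z \<omega>)) \<partial>M)"
    using integral_comp_cong_distr[of "X i" M Z "\<lambda>x. exp (t * g x)"] distr[OF i] by simp
qed

lemma (in prob_space) integrable_exp_mult_of_tail:
  fixes Z :: "'a \<Rightarrow> real"
  assumes [measurable]: "Z \<in> borel_measurable M"
    and tail: "\<And>z. z0 \<le> z \<Longrightarrow> prob {\<omega> \<in> space M. z < Z \<omega>} \<le> exp (- a * z)"
    and s: "0 \<le> s" "s < a"
  shows "integrable M (\<lambda>\<omega>. exp (s * Z \<omega>))"
proof -
  define f where "f m \<omega> = exp (s * (z0 + m + 1)) * indicator {z0 + m<..} (Z \<omega>)" for m :: nat and \<omega>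
  have f_meas[measurable]: "f m \<in> borel_measurable M" for m unfolding f_def by measurable
  have f_nonneg: "0 \<le> f m \<omega>" for m \<omega> by (simp add: f_def)
  have f_int: "integrable M (f m)" for m
    by (rule integrable_const_bound[where B = "exp (s * (z0 + m + 1))"]) (auto simp: f_def indicator_def)
  have int_bound: "(\<integral>\<omega>. norm (f m \<omega>) \<partial>M) \<le> exp (s * (z0 + 1) - a * z0) * exp (s - a) ^ m" for m
  proof -
    have "(\<integral>\<omega>. norm (f m \<omega>) \<partial>M)
        = (\<integral>\<omega>. exp (s * (z0 + m + 1)) * indicator {\<omega> \<in> space M. z0 + m < Z \<omega>} \<omega> \<partial>M)"
      by (rule Bochner_Integration.integral_cong) (auto simp: f_def indicator_def)
    also have "\<dots> = exp (s * (z0 + m + 1)) * prob {\<omega> \<in> space M. z0 + m < Z \<omega>}" by simp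
    also have "\<dots> \<le> exp (s * (z0 + m + 1)) * exp (- a * (z0 + m))"
      by (intro mult_left_mono tail) auto
    also have "\<dots> = exp (s * (z0 + 1) - a * z0) * exp (s - a) ^ m"
      by (simp add: exp_of_nat_mult[symmetric] exp_add[symmetric] algebra_simps)
    finally show ?thesis .
  qed
  have "summable (\<lambda>m. exp (s * (z0 + 1) - a * z0) * exp (s - a) ^ m)"
    using s by (intro summable_mult summable_geometric) simp
  hence int_summable: "summable (\<lambda>m. \<integral>\<omega>. norm (f m \<omega>) \<partial>M)"
    by (rule summable_comparison_test'[where N = 0]) (use int_bound in auto)
  have f_summable: "summable (\<lambda>m. f m \<omega>)" for \<omega>
    unfolding f_def by (rule exp_le_sum_of_steps(1)[OF s(1)])
  have "summable (\<lambda>m. norm (f m \<omega>))" for \<omega>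
    using f_summable f_nonneg by simp
  hence "integrable M (\<lambda>\<omega>. \<Sum>m. f m \<omega>)"
    by (intro integrable_suminf[OF f_int _ int_summable] AE_I2)
  hence "integrable M (\<lambda>\<omega>. exp (s * (z0 + 1)) + (\<Sum>m. f m \<omega>))" by simp
  thus ?thesis
  proof (rule Bochner_Integration.integrable_bound)
    have "exp (s * Z \<omega>) \<le> exp (s * (z0 + 1)) + (\<Sum>m. f m \<omega>)" for \<omega>
      unfolding f_def by (rule exp_le_sum_of_steps(2)[OF s(1)])
    moreover have "0 \<le> (\<Sum>m. f m \<omega>)" for \<omega>
      by (intro suminf_nonneg f_summable f_nonneg)
    ultimately show "AE \<omega> in M. norm (exp (s * Z \<omega>)) \<le> norm (exp (s * (z0 + 1)) + (\<Sum>m. f m \<omega>))"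
      by (intro AE_I2) simp
  qed measurable
qed

lemma (in prob_space) mgf_le_exp_quadratic:
  fixes Z :: "'a \<Rightarrow> real"
  assumes [measurable]: "Z \<in> borel_measurable M"
    and "integrable M Z" "(\<integral>\<omega>. Z \<omega> \<partial>M) = 0" "integrable M (\<lambda>\<omega>. (Z \<omega>)\<^sup>2)"
    and t0: "0 < t0" and "integrable M (\<lambda>\<omega>. exp (2 * t0 * max 0 (Z \<omega>)))"
  obtains C where "0 < C"
    and "\<And>t. 0 \<le> t \<Longrightarrow> t \<le> t0 \<Longrightarrow> integrable M (\<lambda>\<omega>. exp (t * Z \<omega>))"
    and "\<And>t. 0 \<le> t \<Longrightarrow> t \<le> t0 \<Longrightarrow> (\<integral>\<omega>. exp (t * Z \<omega>) \<partial>M) \<le> exp (C * t\<^sup>2)"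
proof
  define H where "H \<omega> = (Z \<omega>)\<^sup>2 * exp (t0 * max 0 (Z \<omega>))" for \<omega>
  have [measurable]: "H \<in> borel_measurable M" unfolding H_def by measurable
  have H_int: "integrable M H"
  proof (rule Bochner_Integration.integrable_bound)
    show "integrable M (\<lambda>\<omega>. (Z \<omega>)\<^sup>2 + 2 / t0\<^sup>2 * exp (2 * t0 * max 0 (Z \<omega>)))"
      using assms(4,6) by auto
    show "AE \<omega> in M. norm (H \<omega>) \<le> norm ((Z \<omega>)\<^sup>2 + 2 / t0\<^sup>2 * exp (2 * t0 * max 0 (Z \<omega>)))"
      using sq_mult_exp_le[OF t0] by (intro AE_I2) (auto simp: H_def)
  qed measurable
  define C where "C = (\<integral>\<omega>. H \<omega> \<partial>M) / 2 + 1"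
  have "0 \<le> (\<integral>\<omega>. H \<omega> \<partial>M)" by (intro integral_nonneg_AE AE_I2) (simp add: H_def)
  thus "0 < C" by (simp add: C_def)
  fix t assume t: "0 \<le> t" "t \<le> t0"
  have bound: "exp (t * Z \<omega>) \<le> 1 + t * Z \<omega> + t\<^sup>2 / 2 * H \<omega>" for \<omega>
    unfolding H_def by (rule exp_mult_le_second_order[OF t])
  have bound_int: "integrable M (\<lambda>\<omega>. 1 + t * Z \<omega> + t\<^sup>2 / 2 * H \<omega>)"
    using assms(2) H_int by auto
  have "norm (exp (t * Z \<omega>)) \<le> norm (1 + t * Z \<omega> + t\<^sup>2 / 2 * H \<omega>)" for \<omega>
    using bound[of \<omega>] exp_gt_zero[of "t * Z \<omega>"] by (smt (verit) real_norm_def)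
  thus int: "integrable M (\<lambda>\<omega>. exp (t * Z \<omega>))"
    by (intro Bochner_Integration.integrable_bound[OF bound_int] AE_I2) auto
  have "(\<integral>\<omega>. exp (t * Z \<omega>) \<partial>M) \<le> (\<integral>\<omega>. 1 + t * Z \<omega> + t\<^sup>2 / 2 * H \<omega> \<partial>M)"
    by (intro integral_mono int bound_int bound)
  also have "\<dots> = 1 + t\<^sup>2 * ((\<integral>\<omega>. H \<omega> \<partial>M) / 2)"
    using assms(2,3) H_int by (simp add: prob_space)
  also have "\<dots> \<le> 1 + C * t\<^sup>2" by (simp add: C_def algebra_simps)
  also have "\<dots> \<le> exp (C * t\<^sup>2)" by (rule exp_ge_add_one_self)
  finally show "(\<integral>\<omega>. exp (t * Z \<omega>) \<partial>M) \<le> exp (C * t\<^sup>2)" .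
qed

section \<open>Partial sums and maxima\<close>

lemma psum_diff:
  assumes "i \<le> j"
  shows "psum X j \<omega> - psum X i \<omega> = (\<Sum>m\<in>{Suc i..j}. X m \<omega>)"
proof -
  have "{1..j} = {1..i} \<union> {Suc i..j}" using assms by auto
  thus ?thesis unfolding psum_def by (simp add: sum.union_disjoint)
qed

lemma psum_Suc_diff: "psum X (Suc i) \<omega> - psum X i \<omega> = X (Suc i) \<omega>"
  using psum_diff[of i "Suc i"] by simp

lemma Umax_eq_Max_image: "Umax X n \<omega> = Max ((\<lambda>k. X k \<omega>) ` {1..n})"
  unfolding Umax_def by (rule arg_cong[where f = Max]) auto

lemma Mmax_eq_Max_image:
  "Mmax X n \<omega> = Max ((\<lambda>(i, j). (psum X j \<omega> - psum X i \<omega>) / sqrt (real (j - i))) ` {(i, j). i < j \<and> j \<le> n})"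
  unfolding Mmax_def by (rule arg_cong[where f = Max]) auto

lemma finite_index_pairs: "finite {(i, j). i < j \<and> j \<le> (n::nat)}"
  by (rule finite_subset[of _ "{..n} \<times> {..n}"]) auto

lemma
  assumes "\<And>k. 1 \<le> k \<Longrightarrow> X k \<in> borel_measurable M"
  shows psum_measurable: "psum X j \<in> borel_measurable M"
    and Mmax_measurable: "Mmax X n \<in> borel_measurable M"
    and Umax_measurable: "Umax X n \<in> borel_measurable M"
proof -
  show psum: "psum X j \<in> borel_measurable M" for j
    unfolding psum_def[abs_def] using assms by (intro borel_measurable_sum) auto
  show "Mmax X n \<in> borel_measurable M"
    unfolding Mmax_eq_Max_image[abs_def] using psum
    by (intro borel_measurable_Max[OF finite_index_pairs]) (auto split: prod.splits)
  show "Umax X n \<in> borel_measurable M"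
    unfolding Umax_eq_Max_image[abs_def] using assms by (intro borel_measurable_Max) auto
qed

lemma Mmax_eq_Umax_if_windows_le:
  assumes n: "1 \<le> n" and vU: "v < Umax X n \<omega>"
    and windows: "\<And>i j. i < j \<Longrightarrow> j \<le> n \<Longrightarrow> 2 \<le> j - i \<Longrightarrow>
      psum X j \<omega> - psum X i \<omega> \<le> sqrt (real (j - i)) * v"
  shows "Mmax X n \<omega> = Umax X n \<omega>"
  unfolding Mmax_eq_Max_image
proof (rule Max_eqI[OF finite_imageI[OF finite_index_pairs]])
  let ?f = "\<lambda>(i, j). (psum X j \<omega> - psum X i \<omega>) / sqrt (real (j - i))"
  have fin: "finite ((\<lambda>k. X k \<omega>) ` {1..n})" "(\<lambda>k. X k \<omega>) ` {1..n} \<noteq> {}" using n by auto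
  then obtain m where m: "m \<in> {1..n}" "Umax X n \<omega> = X m \<omega>"
    using Max_in[OF fin] unfolding Umax_eq_Max_image by blast
  have X_le: "X k \<omega> \<le> Umax X n \<omega>" if "k \<in> {1..n}" for k
    using Max_ge[OF fin(1)] that unfolding Umax_eq_Max_image by blast
  show "Umax X n \<omega> \<in> ?f ` {(i, j). i < j \<and> j \<le> n}"
  proof (rule image_eqI)
    show "Umax X n \<omega> = ?f (m - 1, m)" using m psum_Suc_diff[of X "m - 1" \<omega>] by simp
  qed (use m(1) in auto)
  fix x assume "x \<in> ?f ` {(i, j). i < j \<and> j \<le> n}"
  then obtain i j where ij: "i < j" "j \<le> n" and x: "x = ?f (i, j)" by auto
  show "x \<le> Umax X n \<omega>"
  proof (cases "j = Suc i")
    case True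
    thus ?thesis using x ij X_le[of j] psum_Suc_diff[of X i \<omega>] by simp
  next
    case False
    hence "x \<le> v" using windows[OF ij] ij by (simp add: x divide_le_eq mult.commute)
    thus ?thesis using vU by simp
  qed
qed

lemma (in prob_space) prob_Umax_le_iid:
  assumes indep: "indep_vars (\<lambda>_. borel) X {1..}"
    and distr: "\<And>k. 1 \<le> k \<Longrightarrow> distr M borel (X k) = distr M borel (X 1)" and n: "1 \<le> n"
  shows "prob {\<omega> \<in> space M. Umax X n \<omega> \<le> v} \<le> exp (- (n * prob {\<omega> \<in> space M. v < X 1 \<omega>}))"
proof -
  define p where "p = prob {\<omega> \<in> space M. v < X 1 \<omega>}"
  have [measurable]: "X k \<in> borel_measurable M" if "1 \<le> k" for k
    using indep that by (auto simp: indep_vars_def)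
  have "{\<omega> \<in> space M. Umax X n \<omega> \<le> v} = (\<Inter>k\<in>{1..n}. X k -` {..v} \<inter> space M)"
    using n by (auto simp: Umax_eq_Max_image)
  hence "prob {\<omega> \<in> space M. Umax X n \<omega> \<le> v} = (\<Prod>k\<in>{1..n}. prob (X k -` {..v} \<inter> space M))"
    by (simp only:) (rule indep_varsD[OF indep], use n in auto)
  also have "\<dots> = (\<Prod>k\<in>{1..n}. 1 - p)"
  proof (rule prod.cong[OF refl])
    fix k assume "k \<in> {1..n}"
    hence "prob (X k -` {..v} \<inter> space M) = prob (X 1 -` {..v} \<inter> space M)"
      using distr[of k] measure_distr[of "X k" M borel "{..v}"] measure_distr[of "X 1" M borel "{..v}"] by simp
    also have "\<dots> = 1 - p"
      unfolding p_def by (subst prob_compl[symmetric]) (auto intro!: arg_cong[where f = prob])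
    finally show "prob (X k -` {..v} \<inter> space M) = 1 - p" .
  qed
  also have "\<dots> = (1 - p) ^ n" by simp
  also have "\<dots> \<le> exp (- p) ^ n"
    using exp_ge_add_one_self[of "- p"] by (intro power_mono) (auto simp: p_def)
  also have "\<dots> = exp (- (n * p))" by (simp add: exp_of_nat_mult[symmetric])
  finally show ?thesis by (simp add: p_def)
qed

lemma (in prob_space) prob_Mmax_eq_Umax_lower_bound:
  assumes meas: "\<And>k. 1 \<le> k \<Longrightarrow> X k \<in> borel_measurable M" and n: "1 \<le> n"
    and a: "0 \<le> a" and b: "0 \<le> b"
    and short: "\<And>i j. i < j \<Longrightarrow> j \<le> n \<Longrightarrow> 2 \<le> j - i \<Longrightarrow> sqrt (real (j - i)) \<le> R \<Longrightarrow>
      prob {\<omega> \<in> space M. sqrt (real (j - i)) * v < psum X j \<omega> - psum X i \<omega>} \<le> a"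
    and long: "\<And>i j. i < j \<Longrightarrow> j \<le> n \<Longrightarrow> 2 \<le> j - i \<Longrightarrow> R < sqrt (real (j - i)) \<Longrightarrow>
      prob {\<omega> \<in> space M. sqrt (real (j - i)) * v < psum X j \<omega> - psum X i \<omega>} \<le> b"
  shows "1 - prob {\<omega> \<in> space M. Mmax X n \<omega> = Umax X n \<omega>}
    \<le> prob {\<omega> \<in> space M. Umax X n \<omega> \<le> v} + n * (R\<^sup>2 * a + n * b)"
proof -
  note [measurable] = psum_measurable[OF meas] Mmax_measurable[OF meas] Umax_measurable[OF meas]
  define P where "P = {(i, j). i < j \<and> j \<le> n \<and> 2 \<le> j - i}"
  define E where "E = (\<lambda>(i, j). {\<omega> \<in> space M. sqrt (real (j - i)) * v < psum X j \<omega> - psum X i \<omega>})"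
  define U where "U = {\<omega> \<in> space M. Umax X n \<omega> \<le> v}"
  have fin: "finite P" by (rule finite_subset[OF _ finite_index_pairs[of n]]) (auto simp: P_def)
  have [measurable]: "E ij \<in> sets M" for ij by (cases ij) (simp add: E_def)
  have "Mmax X n \<omega> = Umax X n \<omega>" if \<omega>: "\<omega> \<in> space M" "\<omega> \<notin> U \<union> (\<Union>ij\<in>P. E ij)" for \<omega>
  proof (rule Mmax_eq_Umax_if_windows_le[OF n])
    show "v < Umax X n \<omega>" using \<omega> by (auto simp: U_def)
    fix i j assume "i < j" "j \<le> n" "2 \<le> j - i"
    hence "\<omega> \<notin> E (i, j)" using \<omega> by (auto simp: P_def)
    thus "psum X j \<omega> - psum X i \<omega> \<le> sqrt (real (j - i)) * v" using \<omega> by (auto simp: E_def)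
  qed
  hence "space M - {\<omega> \<in> space M. Mmax X n \<omega> = Umax X n \<omega>} \<subseteq> U \<union> (\<Union>ij\<in>P. E ij)" by blast
  hence "1 - prob {\<omega> \<in> space M. Mmax X n \<omega> = Umax X n \<omega>} \<le> prob (U \<union> (\<Union>ij\<in>P. E ij))"
    by (subst prob_compl[symmetric]) (auto intro!: finite_measure_mono simp: U_def)
  also have "\<dots> \<le> prob U + prob (\<Union>ij\<in>P. E ij)"
    by (rule measure_subadditive) (auto simp: U_def emeasure_eq_measure intro: fin)
  also have "prob (\<Union>ij\<in>P. E ij) \<le> (\<Sum>ij\<in>P. prob (E ij))"
    by (rule finite_measure_subadditive_finite[OF fin]) auto
  also have "(\<Sum>ij\<in>P. prob (E ij)) \<le> (\<Sum>(i, j)\<in>P. if sqrt (real (j - i)) \<le> R then a else b)"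
    using short long by (intro sum_mono) (auto simp: P_def E_def not_le)
  also have "\<dots> \<le> n * (\<Sum>k = 2..n. if sqrt (real k) \<le> R then a else b)"
    unfolding P_def by (rule sum_over_windows_le) (use a b in auto)
  also have "\<dots> \<le> n * (R\<^sup>2 * a + n * b)" by (intro mult_left_mono sum_threshold_le a b) simp
  finally show ?thesis by (simp add: U_def)
qed

section \<open>Stretched exponential tails\<close>

locale iid_stretched_exp_tail = prob_space M for M :: "'a measure" +
  fixes X :: "nat \<Rightarrow> 'a \<Rightarrow> real" and \<alpha> D :: real
  assumes indep: "indep_vars (\<lambda>_. borel) X {1..}"
    and identically_distributed: "\<And>k. 1 \<le> k \<Longrightarrow> distr M borel (X k) = distr M borel (X 1)"
    and integrable_X: "integrable M (X 1)" and mean_zero: "(\<integral>\<omega>. X 1 \<omega> \<partial>M) = 0"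
    and integrable_X_sq: "integrable M (\<lambda>\<omega>. (X 1 \<omega>)\<^sup>2)"
    and alpha_ge_1: "1 \<le> \<alpha>" and alpha_less_2: "\<alpha> < 2" and D_pos: "0 < D"
    and log_tail: "((\<lambda>x. ln (prob {\<omega> \<in> space M. x < X 1 \<omega>}) / x powr \<alpha>) \<longlongrightarrow> - D) at_top"
begin

lemma measurable_X: "1 \<le> k \<Longrightarrow> X k \<in> borel_measurable M"
  using indep by (auto simp: indep_vars_def)

lemma measurable_X1 [measurable]: "X 1 \<in> borel_measurable M"
  by (rule measurable_X) simp

lemma eventually_tail_le:
  assumes "D' < D"
  shows "\<forall>\<^sub>F x in at_top. prob {\<omega> \<in> space M. x < X 1 \<omega>} \<le> exp (- D' * x powr \<alpha>)"
proof -
  have "\<forall>\<^sub>F x in at_top. ln (prob {\<omega> \<in> space M. x < X 1 \<omega>}) / x powr \<alpha> < - D'"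
    using order_tendstoD(2)[OF log_tail, of "- D'"] assms by simp
  with eventually_gt_at_top[of 0] show ?thesis
  proof eventually_elim
    case (elim x)
    define p where "p = prob {\<omega> \<in> space M. x < X 1 \<omega>}"
    show ?case
    proof (cases "p = 0")
      case False
      hence "0 < p" by (simp add: p_def order_less_le)
      moreover have "exp (ln p) < exp (- D' * x powr \<alpha>)"
        using elim by (simp add: p_def pos_divide_less_eq)
      ultimately show ?thesis by (simp add: p_def)
    qed (simp add: p_def)
  qed
qed

lemma eventually_tail_ge:
  assumes "D < D'"
  shows "\<forall>\<^sub>F x in at_top. exp (- D' * x powr \<alpha>) \<le> prob {\<omega> \<in> space M. x < X 1 \<omega>}"
proof -
  have "\<forall>\<^sub>F x in at_top. - D' < ln (prob {\<omega> \<in> space M. x < X 1 \<omega>}) / x powr \<alpha>"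
    using order_tendstoD(1)[OF log_tail, of "- D'"] assms by simp
  moreover have "\<forall>\<^sub>F x in at_top. ln (prob {\<omega> \<in> space M. x < X 1 \<omega>}) / x powr \<alpha> < 0"
    using order_tendstoD(2)[OF log_tail, of 0] D_pos by simp
  ultimately show ?thesis using eventually_gt_at_top[of 0]
  proof eventually_elim
    case (elim x)
    define p where "p = prob {\<omega> \<in> space M. x < X 1 \<omega>}"
    \<comment> \<open>\<open>ln 0 = 0\<close>, so the negative quotient rules out a vanishing tail\<close>
    have "0 < p" using elim by (auto simp: p_def order_less_le)
    moreover have "exp (- D' * x powr \<alpha>) < exp (ln p)"
      using elim by (simp add: p_def pos_less_divide_eq)
    ultimately show ?case by (simp add: p_def)
  qed
qed

lemma integrable_exp_stretched:
  assumes s: "0 \<le> s" "s < D"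
  shows "integrable M (\<lambda>\<omega>. exp (s * max 0 (X 1 \<omega>) powr \<alpha>))"
proof -
  define a where "a = (s + D) / 2"
  have "\<forall>\<^sub>F x in at_top. 1 \<le> x \<and> prob {\<omega> \<in> space M. x < X 1 \<omega>} \<le> exp (- a * x powr \<alpha>)"
    using eventually_ge_at_top[of 1] eventually_tail_le[of a] s by (auto simp: a_def intro: eventually_conj)
  then obtain x0 where x0: "\<And>x. x0 \<le> x \<Longrightarrow> 1 \<le> x \<and> prob {\<omega> \<in> space M. x < X 1 \<omega>} \<le> exp (- a * x powr \<alpha>)"
    unfolding eventually_at_top_linorder by blast
  have tail: "prob {\<omega> \<in> space M. y < max 0 (X 1 \<omega>) powr \<alpha>} \<le> exp (- a * y)"
    if y: "x0 powr \<alpha> \<le> y" for y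
  proof -
    have "1 \<le> x0" using x0[of x0] by simp
    hence x0_le: "x0 \<le> y powr (1 / \<alpha>)"
      using powr_mono2[OF _ _ y, of "1 / \<alpha>"] alpha_ge_1 by (simp add: powr_powr)
    have "0 \<le> y" using y powr_ge_zero[of x0 \<alpha>] by linarith
    hence root: "(y powr (1 / \<alpha>)) powr \<alpha> = y" using alpha_ge_1 by (simp add: powr_powr)
    have "{\<omega> \<in> space M. y < max 0 (X 1 \<omega>) powr \<alpha>} \<subseteq> {\<omega> \<in> space M. y powr (1 / \<alpha>) < X 1 \<omega>}"
    proof safe
      fix \<omega> assume lt: "y < max 0 (X 1 \<omega>) powr \<alpha>"
      show "y powr (1 / \<alpha>) < X 1 \<omega>"
      proof (rule ccontr)
        assume "\<not> y powr (1 / \<alpha>) < X 1 \<omega>"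
        hence "max 0 (X 1 \<omega>) powr \<alpha> \<le> (y powr (1 / \<alpha>)) powr \<alpha>"
          using alpha_ge_1 by (intro powr_mono2) auto
        thus False using lt root by simp
      qed
    qed
    hence "prob {\<omega> \<in> space M. y < max 0 (X 1 \<omega>) powr \<alpha>} \<le> prob {\<omega> \<in> space M. y powr (1 / \<alpha>) < X 1 \<omega>}"
      by (intro finite_measure_mono) measurable
    also have "\<dots> \<le> exp (- a * y)" using x0[OF x0_le] root by simp
    finally show ?thesis .
  qed
  have "(\<lambda>\<omega>. max 0 (X 1 \<omega>) powr \<alpha>) \<in> borel_measurable M" by measurable
  from integrable_exp_mult_of_tail[OF this tail] s show ?thesis by (simp add: a_def)
qed

lemma mgf_subgaussian:
  obtains t0 C where "0 < t0" "0 < C"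
    and "\<And>t. 0 \<le> t \<Longrightarrow> t \<le> t0 \<Longrightarrow> integrable M (\<lambda>\<omega>. exp (t * X 1 \<omega>))"
    and "\<And>t. 0 \<le> t \<Longrightarrow> t \<le> t0 \<Longrightarrow> (\<integral>\<omega>. exp (t * X 1 \<omega>) \<partial>M) \<le> exp (C * t\<^sup>2)"
proof -
  define t0 where "t0 = D / 4"
  have t0: "0 < t0" "0 \<le> 2 * t0" "2 * t0 < D" using D_pos by (auto simp: t0_def)
  \<comment> \<open>\<open>x \<le> 1 + x powr \<alpha>\<close> for \<open>x \<ge> 0\<close> reduces the exponential moment of \<open>X\<^sup>+\<close> to the stretched one\<close>
  have bound: "exp (2 * t0 * max 0 (X 1 \<omega>)) \<le> exp (2 * t0) * exp (2 * t0 * max 0 (X 1 \<omega>) powr \<alpha>)" for \<omega>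
  proof -
    have "max 0 (X 1 \<omega>) \<le> 1 + max 0 (X 1 \<omega>) powr \<alpha>"
    proof (cases "max 0 (X 1 \<omega>) \<le> 1")
      case True
      thus ?thesis using powr_ge_zero[of "max 0 (X 1 \<omega>)" \<alpha>] by linarith
    next
      case False
      hence "max 0 (X 1 \<omega>) powr 1 \<le> max 0 (X 1 \<omega>) powr \<alpha>" using alpha_ge_1 by (intro powr_mono) auto
      thus ?thesis using False by simp
    qed
    hence "2 * t0 * max 0 (X 1 \<omega>) \<le> 2 * t0 * (1 + max 0 (X 1 \<omega>) powr \<alpha>)"
      using t0(2) by (rule mult_left_mono)
    thus ?thesis by (simp add: exp_add[symmetric] distrib_left)
  qed
  have "integrable M (\<lambda>\<omega>. exp (2 * t0 * max 0 (X 1 \<omega>)))"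
  proof (rule Bochner_Integration.integrable_bound)
    show "integrable M (\<lambda>\<omega>. exp (2 * t0) * exp (2 * t0 * max 0 (X 1 \<omega>) powr \<alpha>))"
      using integrable_exp_stretched[OF t0(2,3)] by simp
    show "AE \<omega> in M. norm (exp (2 * t0 * max 0 (X 1 \<omega>)))
        \<le> norm (exp (2 * t0) * exp (2 * t0 * max 0 (X 1 \<omega>) powr \<alpha>))"
      using bound by (intro AE_I2) simp
  qed measurable
  thus ?thesis
  proof (rule mgf_le_exp_quadratic[OF measurable_X1 integrable_X mean_zero integrable_X_sq t0(1)])
    fix C assume "0 < C" "\<And>t. 0 \<le> t \<Longrightarrow> t \<le> t0 \<Longrightarrow> integrable M (\<lambda>\<omega>. exp (t * X 1 \<omega>))"
      "\<And>t. 0 \<le> t \<Longrightarrow> t \<le> t0 \<Longrightarrow> (\<integral>\<omega>. exp (t * X 1 \<omega>) \<partial>M) \<le> exp (C * t\<^sup>2)"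
    with t0(1) show ?thesis by (rule that)
  qed
qed

lemma prob_window_chernoff:
  fixes g :: "real \<Rightarrow> real"
  assumes "0 \<le> t" "g \<in> borel_measurable borel" "integrable M (\<lambda>\<omega>. exp (t * g (X 1 \<omega>)))"
  shows "prob {\<omega> \<in> space M. y < (\<Sum>m = Suc i..j. g (X m \<omega>))}
    \<le> exp (- t * y) * (\<integral>\<omega>. exp (t * g (X 1 \<omega>)) \<partial>M) ^ (j - i)"
proof -
  have "indep_vars (\<lambda>_. borel) X {Suc i..j}" by (rule indep_vars_subset[OF indep]) auto
  moreover have "\<And>m. m \<in> {Suc i..j} \<Longrightarrow> distr M borel (X m) = distr M borel (X 1)"
    by (rule identically_distributed) simp
  ultimately have "prob {\<omega> \<in> space M. y < (\<Sum>m = Suc i..j. g (X m \<omega>))}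
      \<le> exp (- t * y) * (\<integral>\<omega>. exp (t * g (X 1 \<omega>)) \<partial>M) ^ card {Suc i..j}"
    by (rule chernoff_sum_iid[OF _ finite_atLeastAtMost _ measurable_X1 assms(2,3,1)])
  thus ?thesis by simp
qed

lemma prob_window_stretched:
  assumes ij: "i < j" and v: "0 < v" and s: "0 \<le> s" "s < D"
  shows "prob {\<omega> \<in> space M. sqrt (real (j - i)) * v < psum X j \<omega> - psum X i \<omega>}
    \<le> exp (- s * (real (j - i) powr (1 - \<alpha> / 2) * v powr \<alpha>))
      * (\<integral>\<omega>. exp (s * max 0 (X 1 \<omega>) powr \<alpha>) \<partial>M) ^ (j - i)"
proof -
  define k where "k = real (j - i)"
  have k: "0 < k" using ij by (simp add: k_def)
  have "{\<omega> \<in> space M. sqrt k * v < psum X j \<omega> - psum X i \<omega>}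
      \<subseteq> {\<omega> \<in> space M. k powr (1 - \<alpha> / 2) * v powr \<alpha> < (\<Sum>m = Suc i..j. max 0 (X m \<omega>) powr \<alpha>)}"
  proof safe
    fix \<omega> assume "sqrt k * v < psum X j \<omega> - psum X i \<omega>"
    also have "\<dots> \<le> (\<Sum>m = Suc i..j. max 0 (X m \<omega>))"
      unfolding psum_diff[OF less_imp_le[OF ij]] by (intro sum_mono) simp
    finally have "(sqrt k * v) powr \<alpha> < (\<Sum>m = Suc i..j. max 0 (X m \<omega>)) powr \<alpha>"
      by (rule powr_less_mono2[rotated 2]) (use k v alpha_ge_1 in auto)
    hence "k powr (1 - \<alpha>) * (sqrt k * v) powr \<alpha> < k powr (1 - \<alpha>) * (\<Sum>m = Suc i..j. max 0 (X m \<omega>)) powr \<alpha>"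
      by (rule mult_strict_left_mono) (use k in simp)
    also have "\<dots> \<le> (\<Sum>m = Suc i..j. max 0 (X m \<omega>) powr \<alpha>)"
      using power_mean_powr_sum[OF finite_atLeastAtMost _ alpha_ge_1, of "Suc i" j "\<lambda>m. max 0 (X m \<omega>)"] ij
      by (simp add: k_def)
    also have "k powr (1 - \<alpha>) * (sqrt k * v) powr \<alpha> = k powr (1 - \<alpha> / 2) * v powr \<alpha>"
      using k v by (simp add: powr_mult powr_half_sqrt[symmetric] powr_powr powr_add[symmetric])
    finally show "k powr (1 - \<alpha> / 2) * v powr \<alpha> < (\<Sum>m = Suc i..j. max 0 (X m \<omega>) powr \<alpha>)" .
  qed
  moreover have "(\<lambda>\<omega>. max 0 (X m \<omega>) powr \<alpha>) \<in> borel_measurable M" if "m \<in> {Suc i..j}" for m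
  proof -
    have [measurable]: "X m \<in> borel_measurable M" using that by (intro measurable_X) simp
    show ?thesis by measurable
  qed
  hence "(\<lambda>\<omega>. \<Sum>m = Suc i..j. max 0 (X m \<omega>) powr \<alpha>) \<in> borel_measurable M"
    by (rule borel_measurable_sum)
  ultimately have "prob {\<omega> \<in> space M. sqrt k * v < psum X j \<omega> - psum X i \<omega>}
      \<le> prob {\<omega> \<in> space M. k powr (1 - \<alpha> / 2) * v powr \<alpha> < (\<Sum>m = Suc i..j. max 0 (X m \<omega>) powr \<alpha>)}"
    unfolding borel_measurable_iff_greater by (intro finite_measure_mono) auto
  also have "\<dots> \<le> exp (- s * (k powr (1 - \<alpha> / 2) * v powr \<alpha>))
      * (\<integral>\<omega>. exp (s * max 0 (X 1 \<omega>) powr \<alpha>) \<partial>M) ^ (j - i)"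
    by (rule prob_window_chernoff[OF s(1) _ integrable_exp_stretched[OF s]]) measurable
  finally show ?thesis by (simp add: k_def)
qed

lemma prob_window_subgaussian:
  assumes ij: "i < j" and t0: "0 < t0" and C: "0 < C"
    and mgf_int: "\<And>t. 0 \<le> t \<Longrightarrow> t \<le> t0 \<Longrightarrow> integrable M (\<lambda>\<omega>. exp (t * X 1 \<omega>))"
    and mgf_le: "\<And>t. 0 \<le> t \<Longrightarrow> t \<le> t0 \<Longrightarrow> (\<integral>\<omega>. exp (t * X 1 \<omega>) \<partial>M) \<le> exp (C * t\<^sup>2)"
    and v: "0 \<le> v" "4 * C * a \<le> v\<^sup>2" "2 * a \<le> t0 * sqrt (real (j - i)) * v"
  shows "prob {\<omega> \<in> space M. sqrt (real (j - i)) * v < psum X j \<omega> - psum X i \<omega>} \<le> exp (- a)"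
proof -
  define r where "r = sqrt (real (j - i))"
  have r: "0 < r" "r\<^sup>2 = real (j - i)" using ij by (auto simp: r_def)
  obtain t where t: "0 \<le> t" "t \<le> t0" and exponent: "- t * (r * v) + r\<^sup>2 * (C * t\<^sup>2) \<le> - a"
    using quadratic_exponent_le[OF C r(1) t0 v(1,2)] v(3) by (auto simp: r_def)
  have "prob {\<omega> \<in> space M. r * v < psum X j \<omega> - psum X i \<omega>}
      = prob {\<omega> \<in> space M. r * v < (\<Sum>m = Suc i..j. X m \<omega>)}"
    using ij by (simp add: psum_diff)
  also have "\<dots> \<le> exp (- t * (r * v)) * (\<integral>\<omega>. exp (t * X 1 \<omega>) \<partial>M) ^ (j - i)"
    using prob_window_chernoff[OF t(1), of "\<lambda>x. x"] mgf_int[OF t] by simp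
  also have "\<dots> \<le> exp (- t * (r * v)) * exp (C * t\<^sup>2) ^ (j - i)"
    using mgf_le[OF t] by (intro mult_left_mono power_mono) auto
  also have "\<dots> = exp (- t * (r * v) + r\<^sup>2 * (C * t\<^sup>2))"
    by (simp add: r(2) exp_of_nat_mult[symmetric] flip: exp_add)
  also have "\<dots> \<le> exp (- a)" using exponent by simp
  finally show ?thesis by (simp add: r_def)
qed

lemma prob_short_window_le:
  assumes ij: "i < j" "2 \<le> j - i" and short: "sqrt (real (j - i)) \<le> 6 * L / (t0 * V)"
    and L: "0 < L" and V: "0 < V" "V powr \<alpha> = c * L" and c: "0 < c" and t0: "0 < t0"
    and s: "0 \<le> s'" "s' < s" "s < D"
    and B: "1 \<le> B" "(\<integral>\<omega>. exp (s * max 0 (X 1 \<omega>) powr \<alpha>) \<partial>M) \<le> B"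
    and stretch: "(6 * L / t0) powr \<alpha> * (ln B + 1) \<le> (s - s') * c\<^sup>2 * L\<^sup>2"
  shows "prob {\<omega> \<in> space M. sqrt (real (j - i)) * V < psum X j \<omega> - psum X i \<omega>}
    \<le> exp (- (2 powr (1 - \<alpha> / 2) * s' * c * L))"
proof -
  define k where "k = real (j - i)"
  have k: "2 \<le> k" using ij by (simp add: k_def)
  have "k powr (\<alpha> / 2) = sqrt k powr \<alpha>" using k by (simp add: powr_half_sqrt[symmetric] powr_powr)
  also have "\<dots> \<le> (6 * L / (t0 * V)) powr \<alpha>"
    using short alpha_ge_1 by (intro powr_mono2) (auto simp: k_def)
  also have "\<dots> = (6 * L / t0) powr \<alpha> / V powr \<alpha>"
    using L V t0 by (subst powr_divide[symmetric]) (auto simp: field_simps)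
  also have "\<dots> = (6 * L / t0) powr \<alpha> / (c * L)" by (simp add: V(2))
  finally have "k powr (\<alpha> / 2) * ln B \<le> (6 * L / t0) powr \<alpha> / (c * L) * (ln B + 1)"
    using B(1) c L by (intro mult_mono) auto
  also have "\<dots> \<le> (s - s') * c\<^sup>2 * L\<^sup>2 / (c * L)"
    using stretch c L by (simp add: divide_right_mono)
  also have "\<dots> = (s - s') * (c * L)" using c L by (simp add: field_simps power2_eq_square)
  finally have exponent: "- s * (k powr (1 - \<alpha> / 2) * (c * L)) + k * ln B \<le> - (2 powr (1 - \<alpha> / 2) * s' * (c * L))"
    using stretched_exponent_le[OF k _ s(1), of "1 - \<alpha> / 2" "c * L" "ln B" s] alpha_less_2 c L by simp
  have "prob {\<omega> \<in> space M. sqrt k * V < psum X j \<omega> - psum X i \<omega>}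
      \<le> exp (- s * (k powr (1 - \<alpha> / 2) * (c * L))) * (\<integral>\<omega>. exp (s * max 0 (X 1 \<omega>) powr \<alpha>) \<partial>M) ^ (j - i)"
    using prob_window_stretched[OF ij(1) V(1), of s] s V(2) by (simp add: k_def)
  also have "\<dots> \<le> exp (- s * (k powr (1 - \<alpha> / 2) * (c * L))) * B ^ (j - i)"
    using B by (intro mult_left_mono power_mono integral_nonneg_AE) auto
  also have "B ^ (j - i) = exp (k * ln B)"
    using B(1) by (simp add: k_def exp_of_nat_mult)
  also have "exp (- s * (k powr (1 - \<alpha> / 2) * (c * L))) * exp (k * ln B)
      = exp (- s * (k powr (1 - \<alpha> / 2) * (c * L)) + k * ln B)"
    by (simp flip: exp_add)
  also have "\<dots> \<le> exp (- (2 powr (1 - \<alpha> / 2) * s' * c * L))" using exponent by (simp add: mult.assoc)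
  finally show ?thesis by (simp add: k_def)
qed

lemma prob_Mmax_eq_Umax_lower_bound_at:
  fixes n :: nat
  assumes n: "1 \<le> n" and L: "0 < L" and V: "0 < V" "V powr \<alpha> = c * L" and c: "0 < c"
    and tail: "exp (- D' * V powr \<alpha>) \<le> prob {\<omega> \<in> space M. V < X 1 \<omega>}"
    and s: "0 \<le> s'" "s' < s" "s < D"
    and B: "1 \<le> B" "(\<integral>\<omega>. exp (s * max 0 (X 1 \<omega>) powr \<alpha>) \<partial>M) \<le> B"
    and t0: "0 < t0" and C: "0 < C"
    and mgf_int: "\<And>t. 0 \<le> t \<Longrightarrow> t \<le> t0 \<Longrightarrow> integrable M (\<lambda>\<omega>. exp (t * X 1 \<omega>))"
    and mgf_le: "\<And>t. 0 \<le> t \<Longrightarrow> t \<le> t0 \<Longrightarrow> (\<integral>\<omega>. exp (t * X 1 \<omega>) \<partial>M) \<le> exp (C * t\<^sup>2)"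
    and gauss: "12 * C * L \<le> V\<^sup>2"
    and stretch: "(6 * L / t0) powr \<alpha> * (ln B + 1) \<le> (s - s') * c\<^sup>2 * L\<^sup>2"
  shows "1 - prob {\<omega> \<in> space M. Mmax X n \<omega> = Umax X n \<omega>}
    \<le> exp (- (n * exp (- (D' * (c * L)))))
      + n * ((6 * L / (t0 * V))\<^sup>2 * exp (- (2 powr (1 - \<alpha> / 2) * s' * c * L)) + n * exp (- (3 * L)))"
proof -
  have "1 - prob {\<omega> \<in> space M. Mmax X n \<omega> = Umax X n \<omega>}
      \<le> prob {\<omega> \<in> space M. Umax X n \<omega> \<le> V}
        + n * ((6 * L / (t0 * V))\<^sup>2 * exp (- (2 powr (1 - \<alpha> / 2) * s' * c * L)) + n * exp (- (3 * L)))"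
  proof (rule prob_Mmax_eq_Umax_lower_bound[OF measurable_X n])
    fix i j assume "i < j" "2 \<le> j - i" "sqrt (real (j - i)) \<le> 6 * L / (t0 * V)"
    thus "prob {\<omega> \<in> space M. sqrt (real (j - i)) * V < psum X j \<omega> - psum X i \<omega>}
        \<le> exp (- (2 powr (1 - \<alpha> / 2) * s' * c * L))"
      by (intro prob_short_window_le[OF _ _ _ L V c t0 s B stretch])
  next
    fix i j assume ij: "i < j" and long: "6 * L / (t0 * V) < sqrt (real (j - i))"
    have "2 * (3 * L) \<le> t0 * sqrt (real (j - i)) * V"
      using long t0 V by (simp add: divide_less_eq mult.commute mult.left_commute)
    thus "prob {\<omega> \<in> space M. sqrt (real (j - i)) * V < psum X j \<omega> - psum X i \<omega>} \<le> exp (- (3 * L))"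
      using gauss V(1) by (intro prob_window_subgaussian[OF ij t0 C mgf_int mgf_le]) auto
  qed auto
  also have "prob {\<omega> \<in> space M. Umax X n \<omega> \<le> V} \<le> exp (- (n * prob {\<omega> \<in> space M. V < X 1 \<omega>}))"
    by (rule prob_Umax_le_iid[OF indep identically_distributed n])
  also have "\<dots> \<le> exp (- (n * exp (- (D' * (c * L)))))"
    using tail V(2) by (simp add: mult_left_mono)
  finally show ?thesis by simp
qed

lemma prob_Mmax_eq_Umax_tendsto_1:
  "(\<lambda>n. prob {\<omega> \<in> space M. Mmax X n \<omega> = Umax X n \<omega>}) \<longlonglongrightarrow> 1"
proof -
  have "1 < 2 powr (1 - \<alpha> / 2)" using alpha_less_2 by simp
  then obtain s' s D' c where rates: "0 < s'" "s' < s" "s < D" "D < D'" "0 < c" "D' * c < 1"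
    "1 < 2 powr (1 - \<alpha> / 2) * s' * c"
    using D_pos by (rule rate_constants_exist)
  obtain x0 where tail: "\<And>x. x0 \<le> x \<Longrightarrow> exp (- D' * x powr \<alpha>) \<le> prob {\<omega> \<in> space M. x < X 1 \<omega>}"
    using eventually_tail_ge[OF rates(4)] unfolding eventually_at_top_linorder by blast
  define B where "B = max 1 (\<integral>\<omega>. exp (s * max 0 (X 1 \<omega>) powr \<alpha>) \<partial>M)"
  have B: "1 \<le> B" "(\<integral>\<omega>. exp (s * max 0 (X 1 \<omega>) powr \<alpha>) \<partial>M) \<le> B" by (simp_all add: B_def)
  obtain t0 C where t0: "0 < t0" and C: "0 < C"
    and mgf_int: "\<And>t. 0 \<le> t \<Longrightarrow> t \<le> t0 \<Longrightarrow> integrable M (\<lambda>\<omega>. exp (t * X 1 \<omega>))"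
    and mgf_le: "\<And>t. 0 \<le> t \<Longrightarrow> t \<le> t0 \<Longrightarrow> (\<integral>\<omega>. exp (t * X 1 \<omega>) \<partial>M) \<le> exp (C * t\<^sup>2)"
    by (rule mgf_subgaussian) (rule that)
  define b where "b n = exp (- (n * exp (- (D' * c * ln n))))
    + n * ((6 * ln n / (t0 * (c * ln n) powr (1 / \<alpha>)))\<^sup>2 * exp (- (2 powr (1 - \<alpha> / 2) * s' * c * ln n))
      + n * exp (- (3 * ln n)))" for n :: nat
  have "0 < (s - s') * c\<^sup>2" using rates by simp
  from eventually_threshold_conditions[OF rates(5) alpha_ge_1 alpha_less_2 t0 this, of x0 C "ln B + 1"]
  have lower: "\<forall>\<^sub>F n in sequentially. 1 - b n \<le> prob {\<omega> \<in> space M. Mmax X n \<omega> = Umax X n \<omega>}"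
  proof eventually_elim
    case (elim n)
    hence L: "0 < ln (real n)" by simp
    have V: "0 < (c * ln n) powr (1 / \<alpha>)" "((c * ln n) powr (1 / \<alpha>)) powr \<alpha> = c * ln n"
      using rates(5) L alpha_ge_1 by (auto simp: powr_powr)
    have "1 - prob {\<omega> \<in> space M. Mmax X n \<omega> = Umax X n \<omega>}
        \<le> exp (- (n * exp (- (D' * (c * ln n)))))
          + n * (((6 * ln n / (t0 * (c * ln n) powr (1 / \<alpha>))))\<^sup>2 * exp (- (2 powr (1 - \<alpha> / 2) * s' * c * ln n))
            + n * exp (- (3 * ln n)))"
    proof (rule prob_Mmax_eq_Umax_lower_bound_at[OF _ L V rates(5) _ _ rates(2,3) B t0 C mgf_int mgf_le])
      show "exp (- D' * ((c * ln n) powr (1 / \<alpha>)) powr \<alpha>) \<le> prob {\<omega> \<in> space M. (c * ln n) powr (1 / \<alpha>) < X 1 \<omega>}"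
        using elim by (intro tail) simp
    qed (use elim rates in auto)
    thus ?case by (simp add: b_def mult.assoc)
  qed
  have "b \<longlonglongrightarrow> 0"
    unfolding b_def using rates alpha_ge_1 t0 by (intro threshold_bound_tendsto_0) auto
  hence "(\<lambda>n. 1 - b n) \<longlonglongrightarrow> 1"
    using tendsto_diff[OF tendsto_const[of 1]] by fastforce
  moreover have "\<forall>\<^sub>F n in sequentially. prob {\<omega> \<in> space M. Mmax X n \<omega> = Umax X n \<omega>} \<le> 1" by simp
  ultimately show ?thesis by (intro tendsto_sandwich[OF lower _ _ tendsto_const])
qed

end

theorem theorem1p7:
  fixes M :: "'a measure" and X :: "nat \<Rightarrow> 'a \<Rightarrow> real" and \<alpha> D :: real
  assumes "prob_space M"
    and "\<And>k. k \<ge> 1 \<Longrightarrow> X k \<in> borel_measurable M"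
    and "prob_space.indep_vars M (\<lambda>_. borel) X {1..}"
    and "\<And>k. k \<ge> 1 \<Longrightarrow> distr M borel (X k) = distr M borel (X 1)"
    and "integrable M (X 1)" and "(\<integral>\<omega>. X 1 \<omega> \<partial>M) = 0"
    and "integrable M (\<lambda>\<omega>. (X 1 \<omega>)\<^sup>2)" and "(\<integral>\<omega>. (X 1 \<omega>)\<^sup>2 \<partial>M) = 1"
    and "1 \<le> \<alpha>" and "\<alpha> < 2" and "D > 0"
    and "((\<lambda>x. ln (measure M {\<omega> \<in> space M. X 1 \<omega> > x}) / x powr \<alpha>) \<longlongrightarrow> - D) at_top"
  shows "(\<lambda>n. measure M {\<omega> \<in> space M. Mmax X n \<omega> = Umax X n \<omega>}) \<longlonglongrightarrow> 1"
proof -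
  interpret iid_stretched_exp_tail M X \<alpha> D
    by (rule iid_stretched_exp_tail.intro[OF assms(1) iid_stretched_exp_tail_axioms.intro[OF assms(3-7,9-12)]])
  show ?thesis by (rule prob_Mmax_eq_Umax_tendsto_1)
qed

end
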